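(* Fix one of the moves $F1$, $F2$ and one of the moves $F3$, $F4$. Let $D$ be the Gauss diagram of an arbitrary twisted knot diagram. Then there is a finite sequence of moves of types $R1$, $R2$, $R3$, $T2$, $T3$, together with the forbidden moves $T4$, the chosen one of $F1$/$F2$, and the chosen one of $F3$/$F4$, which transforms $D$ into either the Gauss diagram of the trivial knot (a circle with no chords and no bars) or the Gauss diagram of the trivial knot with a bar (a circle with no chords and exactly one bar).
   Context: A twisted knot diagram is a virtual knot diagram (an oriented generic immersed circle in the plane whose double points are either classical crossings, carrying over/under information, or virtual crossings, carrying none) which may in addition carry finitely many bars: short segments marked transversally on arcs, away from crossings. Twisted knots are equivalence classes of such diagrams under the classical Reidemeister moves $R1,R2,R3$, the virtual Reidemeister moves $V1$–$V4$, and the twisted Reidemeister moves $T1$ (a bar slides through a virtual crossing), $T2$ (two consecutive bars on an arc cancel), $T3$ (a classical crossing having a bar on each of its four incident arcs next to the crossing is replaced by the crossing with over- and under-strand exchanged, the four bars being removed). Gauss diagram of a twisted knot diagram: an oriented circle (the parametrizing circle of the knot) on which are marked, in the order met when traversing the knot from a basepoint, the two preimages of each classical crossing and one point for each bar. For each classical crossing a chord joins its two preimages, oriented from the overcrossing preimage (the arrowtail) to the undercrossing preimage (the arrowhead), and labelled by the sign $\varepsilon\in\{+,-\}$ of the crossing. Virtual crossings are not recorded. Two marked points (chord endpoints or bars) are called adjacent if no other marked point lies between them on the circle. Moves on Gauss diagrams (each may be applied in either direction): - $R1,R2,R3$: the standard Gauss-diagram versions of the classical Reidemeister moves, i.e.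 the changes of Gauss diagrams induced by classical Reidemeister moves on diagrams (e.g. $R1$ adds or removes a chord of any orientation and sign whose two endpoints are adjacent). - $T2$: add or remove two adjacent bars. - $T3$: if each endpoint of a chord is immediately preceded and immediately followed by a bar, remove these four bars, reverse the orientation of the chord and change its sign (the Gauss-diagram version of the move $T3$ above). Virtual moves and $T1$ do not change the Gauss diagram. Forbidden moves: - $T4$: add or remove a chord (of any orientation and sign) whose two endpoints are separated by exactly one bar and no other marked point (a curl with a bar). - $F1$: exchange the positions of two adjacent arrowheads of different chords (signs arbitrary). - $F2$: exchange the positions of two adjacent arrowtails of different chords (signs arbitrary). - $F3$: if two arrowheads of different chords are separated by exactly one bar and no other marked point, exchange their positions (the bar stays between them). - $F4$: the same as $F3$ for two arrowtails. *)

theory Defs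
  imports Main
begin

text \<open>A Gauss diagram is encoded as the list of
marked points met when traversing the parametrizing circle from a basepoint.  A marked point
is a bar, the arrowtail (overcrossing preimage) of the chord with label a and sign s, or the
arrowhead (undercrossing preimage) of that chord.  Signs: True = +, False = -.
Changing the basepoint (rotating the list) does not change the diagram; it is allowed as a
step below.\<close>

datatype mark = Bar | Tl nat bool | Hd nat bool

fun lab :: "mark \<Rightarrow> nat option" where
  "lab Bar = None"
| "lab (Tl a s) = Some a"
| "lab (Hd a s) = Some a"

definition wf_gauss :: "mark list \<Rightarrow> bool" where
  "wf_gauss D \<longleftrightarrow> (\<forall>a. filter (\<lambda>m. lab m = Some a) D = [] \<or>
      (\<exists>s. filter (\<lambda>m. lab m = Some a) D \<in> {[Tl a s, Hd a s], [Hd a s, Tl a s]}))"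

definition chord_ends :: "nat \<Rightarrow> bool \<Rightarrow> mark \<Rightarrow> mark \<Rightarrow> bool" where
  "chord_ends a s e1 e2 \<longleftrightarrow> (e1 = Tl a s \<and> e2 = Hd a s) \<or> (e1 = Hd a s \<and> e2 = Tl a s)"

fun flip :: "mark \<Rightarrow> mark" where
  "flip Bar = Bar"
| "flip (Tl a s) = Hd a (\<not> s)"
| "flip (Hd a s) = Tl a (\<not> s)"

text \<open>R3 local data: chord a from the top strand to the middle strand, chord b from the top
strand to the bottom strand, chord c from the middle strand to the bottom strand, with signs
ea eb ec.  u1: on the top strand the tail of a precedes the tail of b; u2: on the middle strand
the head of a precedes the tail of c; u3: on the bottom strand the head of b precedes the head
of c.  The configuration is realizable iff (u1 = u2) = (eb = ec) and (u2 = u3) = (ea = eb);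
the move reverses the order within each of the three pairs.\<close>

definition r3_top :: "nat \<Rightarrow> bool \<Rightarrow> nat \<Rightarrow> bool \<Rightarrow> bool \<Rightarrow> mark list" where
  "r3_top a ea b eb u = (if u then [Tl a ea, Tl b eb] else [Tl b eb, Tl a ea])"

definition r3_mid :: "nat \<Rightarrow> bool \<Rightarrow> nat \<Rightarrow> bool \<Rightarrow> bool \<Rightarrow> mark list" where
  "r3_mid a ea c ec u = (if u then [Hd a ea, Tl c ec] else [Tl c ec, Hd a ea])"

definition r3_bot :: "nat \<Rightarrow> bool \<Rightarrow> nat \<Rightarrow> bool \<Rightarrow> bool \<Rightarrow> mark list" where
  "r3_bot b eb c ec u = (if u then [Hd b eb, Hd c ec] else [Hd c ec, Hd b eb])"

text \<open>One-directional local moves; the arguments f1 and f3 record the choice of forbidden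
moves: f1 = True means F1 (else F2), f3 = True means F3 (else F4).  Moves are applied in
either direction via the symmetric closure in gstep.\<close>

inductive basic_move :: "bool \<Rightarrow> bool \<Rightarrow> mark list \<Rightarrow> mark list \<Rightarrow> bool" for f1 f3 where
  R1: "chord_ends a s e1 e2 \<Longrightarrow> basic_move f1 f3 (X @ Y) (X @ [e1, e2] @ Y)"
| R2: "H \<in> {[Hd a s, Hd b (\<not> s)], [Hd b (\<not> s), Hd a s]} \<Longrightarrow>
       basic_move f1 f3 (X @ Y @ Z) (X @ [Tl a s, Tl b (\<not> s)] @ Y @ H @ Z)"
| R2': "H \<in> {[Hd a s, Hd b (\<not> s)], [Hd b (\<not> s), Hd a s]} \<Longrightarrow>
       basic_move f1 f3 (X @ Y @ Z) (X @ H @ Y @ [Tl a s, Tl b (\<not> s)] @ Z)"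
| R3: "(u1 = u2) = (eb = ec) \<Longrightarrow> (u2 = u3) = (ea = eb) \<Longrightarrow>
       basic_move f1 f3
         (X @ r3_top a ea b eb u1 @ Y @ r3_mid a ea c ec u2 @ Z @ r3_bot b eb c ec u3 @ W)
         (X @ r3_top a ea b eb (\<not> u1) @ Y @ r3_mid a ea c ec (\<not> u2) @ Z @ r3_bot b eb c ec (\<not> u3) @ W)"
| R3': "(u1 = u2) = (eb = ec) \<Longrightarrow> (u2 = u3) = (ea = eb) \<Longrightarrow>
       basic_move f1 f3
         (X @ r3_top a ea b eb u1 @ Y @ r3_bot b eb c ec u3 @ Z @ r3_mid a ea c ec u2 @ W)
         (X @ r3_top a ea b eb (\<not> u1) @ Y @ r3_bot b eb c ec (\<not> u3) @ Z @ r3_mid a ea c ec (\<not> u2) @ W)"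
| T2: "basic_move f1 f3 (X @ Y) (X @ [Bar, Bar] @ Y)"
| T3: "chord_ends a s e1 e2 \<Longrightarrow>
       basic_move f1 f3 (X @ [Bar, e1, Bar] @ Y @ [Bar, e2, Bar] @ Z)
                         (X @ [flip e1] @ Y @ [flip e2] @ Z)"
| T4: "chord_ends a s e1 e2 \<Longrightarrow> basic_move f1 f3 (X @ [Bar] @ Y) (X @ [e1, Bar, e2] @ Y)"
| F1: "f1 \<Longrightarrow> basic_move f1 f3 (X @ [Hd a s, Hd b t] @ Y) (X @ [Hd b t, Hd a s] @ Y)"
| F2: "\<not> f1 \<Longrightarrow> basic_move f1 f3 (X @ [Tl a s, Tl b t] @ Y) (X @ [Tl b t, Tl a s] @ Y)"
| F3: "f3 \<Longrightarrow> basic_move f1 f3 (X @ [Hd a s, Bar, Hd b t] @ Y) (X @ [Hd b t, Bar, Hd a s] @ Y)"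
| F4: "\<not> f3 \<Longrightarrow> basic_move f1 f3 (X @ [Tl a s, Bar, Tl b t] @ Y) (X @ [Tl b t, Bar, Tl a s] @ Y)"

text \<open>A step between Gauss diagrams: a change of basepoint, or one of the moves in either
direction.  Both diagrams are required to be well-formed (this forces freshly added chords to
carry new labels).\<close>

definition gstep :: "bool \<Rightarrow> bool \<Rightarrow> mark list \<Rightarrow> mark list \<Rightarrow> bool" where
  "gstep f1 f3 D D' \<longleftrightarrow> wf_gauss D \<and> wf_gauss D' \<and>
     (D' = rotate1 D \<or> basic_move f1 f3 D D' \<or> basic_move f1 f3 D' D)"

end

theory Submission
  imports Defs
begin

text \<open>Every chord can be removed.  After moving the basepoint, the head of the chord comes
before its tail, and the head is pushed towards the tail past everything in between: past
another head by the chosen move F1 or F3, past a tail by first turning that tail into a head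
with T3, and adjacent bars cancel by T2.  When head and tail are adjacent or separated by a
single bar, R1 or T4 deletes the chord.  Either choice of forbidden moves suffices, because
twisting two chords with T3 turns heads into tails and so exchanges F1 with F2 and F3 with F4.
Once all chords are gone, T2 leaves zero bars or one.\<close>

abbreviation endpoints :: "nat \<Rightarrow> mark list \<Rightarrow> mark list" where
  "endpoints a D \<equiv> filter (\<lambda>m. lab m = Some a) D"

abbreviation chord_marks :: "mark list \<Rightarrow> mark list" where
  "chord_marks D \<equiv> filter (\<lambda>m. m \<noteq> Bar) D"

lemma wf_gauss_by_endpoints:
  "wf_gauss D \<Longrightarrow> (\<And>c. endpoints c D' = endpoints c D) \<Longrightarrow>
    wf_gauss D'"
  by (simp add: wf_gauss_def)

lemma append_swap_in_pair:
  "A @ B \<in> {[u, v], [v, u]} \<Longrightarrow> B @ A \<in> {[u, v], [v, u]}"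
  by (auto simp: append_eq_Cons_conv Cons_eq_append_conv)

lemma wf_gauss_append_swap:
  assumes "wf_gauss (X @ Y)"
  shows "wf_gauss (Y @ X)"
  unfolding wf_gauss_def
proof
  fix c
  from assms have "endpoints c X @ endpoints c Y = [] \<or>
      (\<exists>s. endpoints c X @ endpoints c Y \<in> {[Tl c s, Hd c s], [Hd c s, Tl c s]})"
    unfolding wf_gauss_def by simp
  then show "endpoints c (Y @ X) = [] \<or>
      (\<exists>s. endpoints c (Y @ X) \<in> {[Tl c s, Hd c s], [Hd c s, Tl c s]})"
    using append_swap_in_pair by fastforce
qed

lemma wf_gauss_rotate1: "wf_gauss D \<Longrightarrow> wf_gauss (rotate1 D)"
  by (cases D) (auto intro: wf_gauss_append_swap[of "[_]"])

lemma length_endpoints_le: "wf_gauss D \<Longrightarrow> length (endpoints a D) \<le> 2"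
  unfolding wf_gauss_def by (auto dest!: spec[of _ a])

lemma endpoints_outside_chord:
  assumes "wf_gauss (X @ [Hd a s] @ Y @ [Tl a s] @ Z)"
  shows "endpoints a X = []" "endpoints a Y = []" "endpoints a Z = []"
  using length_endpoints_le[OF assms, of a] by auto

lemma wf_gauss_delete_chord:
  assumes "wf_gauss (X @ [Hd a s] @ Y @ [Tl a s] @ Z)"
  shows "wf_gauss (X @ Y @ Z)"
proof -
  have "endpoints c (X @ Y @ Z) =
      (if c = a then [] else endpoints c (X @ [Hd a s] @ Y @ [Tl a s] @ Z))" for c
    using endpoints_outside_chord[OF assms] by auto
  with assms show ?thesis unfolding wf_gauss_def by (metis (no_types, lifting))
qed

lemma wf_gauss_chord_split:
  assumes "wf_gauss D" "endpoints a D \<noteq> []"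
  obtains s u v X Y Z where "chord_ends a s u v" "D = X @ [u] @ Y @ [v] @ Z"
    "endpoints a X = []" "endpoints a Y = []" "endpoints a Z = []"
proof -
  from assms obtain s where "endpoints a D \<in> {[Tl a s, Hd a s], [Hd a s, Tl a s]}"
    unfolding wf_gauss_def by blast
  then obtain u v where uv: "chord_ends a s u v" and ends: "endpoints a D = [u, v]"
    by (auto simp: chord_ends_def)
  from ends obtain X R where
    "D = X @ u # R" "\<forall>m\<in>set X. lab m \<noteq> Some a" "[v] = endpoints a R"
    unfolding filter_eq_Cons_iff by blast
  moreover from \<open>[v] = endpoints a R\<close>[symmetric] obtain Y Z where
    "R = Y @ v # Z" "\<forall>m\<in>set Y. lab m \<noteq> Some a" "[] = endpoints a Z"
    unfolding filter_eq_Cons_iff by blast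
  ultimately show ?thesis
    by (intro that[OF uv, of X Y Z]) (auto simp: filter_empty_conv)
qed

fun twist_chord :: "nat \<Rightarrow> mark list \<Rightarrow> mark list" where
  "twist_chord a [] = []"
| "twist_chord a (m # D) = (if lab m = Some a then [Bar, flip m, Bar] else [m]) @ twist_chord a D"

lemma twist_chord_append [simp]: "twist_chord a (X @ Y) = twist_chord a X @ twist_chord a Y"
  by (induction X) auto

lemma twist_chord_id: "endpoints a D = [] \<Longrightarrow> twist_chord a D = D"
  by (induction D) (auto split: if_splits)

lemma lab_flip [simp]: "lab (flip m) = lab m"
  by (cases m) auto

lemma flip_flip [simp]: "flip (flip m) = m"
  by (cases m) auto

lemma endpoints_twist_chord:
  "endpoints c (twist_chord a D) = (if c = a then map flip (endpoints c D) else endpoints c D)"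
  by (induction D) auto

lemma wf_gauss_twist_chord: "wf_gauss D \<Longrightarrow> wf_gauss (twist_chord a D)"
  unfolding wf_gauss_def endpoints_twist_chord by (auto intro: exI[of _ "\<not> _"])

lemma wf_gauss_replicate_Bar: "wf_gauss (replicate k Bar)"
  by (simp add: wf_gauss_def)

context
  fixes f1 f3 :: bool
begin

abbreviation moves :: "mark list \<Rightarrow> mark list \<Rightarrow> bool" where
  "moves \<equiv> (gstep f1 f3)\<^sup>*\<^sup>*"

lemma wf_gauss_moves: "moves D D' \<Longrightarrow> wf_gauss D \<Longrightarrow> wf_gauss D'"
  by (induction rule: rtranclp_induct) (auto simp: gstep_def)

lemma moves_move:
  "basic_move f1 f3 D D' \<or> basic_move f1 f3 D' D \<Longrightarrow> wf_gauss D \<Longrightarrow> wf_gauss D' \<Longrightarrow>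
    moves D D'"
  by (rule r_into_rtranclp) (simp add: gstep_def)

lemma moves_same_endpoints:
  assumes "basic_move f1 f3 D D' \<or> basic_move f1 f3 D' D" "wf_gauss D"
    "\<And>c. endpoints c D' = endpoints c D"
  shows "moves D D'"
  using assms(1,2) wf_gauss_by_endpoints[OF assms(2,3)] by (rule moves_move)

lemma moves_rotate: "wf_gauss D \<Longrightarrow> moves D (rotate n D)"
proof (induction n)
  case (Suc n)
  then have "wf_gauss (rotate n D)"
    using wf_gauss_moves by blast
  then have "gstep f1 f3 (rotate n D) (rotate (Suc n) D)"
    by (simp add: gstep_def wf_gauss_rotate1)
  with Suc show ?case by simp
qed simp

lemma moves_append_swap: "wf_gauss (X @ Y) \<Longrightarrow> moves (X @ Y) (Y @ X)"
  by (metis moves_rotate rotate_append)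

lemma moves_sym: "moves D D' \<Longrightarrow> moves D' D"
proof (induction rule: rtranclp_induct)
  case (step D' D'')
  have "moves D'' D'"
  proof (cases "D'' = rotate1 D' \<and> D' \<noteq> []")
    case True
    then obtain m E where "D' = m # E" "D'' = E @ [m]"
      by (cases D') auto
    with step.hyps(2) show ?thesis
      by (metis append.left_neutral append_Cons gstep_def moves_append_swap)
  next
    case False
    with step.hyps(2) show ?thesis by (auto simp: gstep_def)
  qed
  with step.IH show ?case by simp
qed simp

lemma moves_insert_bars: "wf_gauss (X @ Y) \<Longrightarrow> moves (X @ Y) (X @ [Bar, Bar] @ Y)"
  using basic_move.T2[of f1 f3 X Y] by (intro moves_same_endpoints) auto

lemma moves_cancel_bars: "wf_gauss (X @ Y) \<Longrightarrow> moves (X @ [Bar, Bar] @ Y) (X @ Y)"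
  by (rule moves_sym, rule moves_insert_bars)

lemma moves_twist_chord: "wf_gauss D \<Longrightarrow> moves D (twist_chord a D)"
proof (cases "endpoints a D = []")
  case True
  then show ?thesis by (simp add: twist_chord_id)
next
  case False
  assume w: "wf_gauss D"
  then obtain s u v X Y Z where uv: "chord_ends a s u v" and D: "D = X @ [u] @ Y @ [v] @ Z"
    and "endpoints a X = []" "endpoints a Y = []" "endpoints a Z = []"
    using False by (rule wf_gauss_chord_split)
  then have twist: "twist_chord a D = X @ [Bar, flip u, Bar] @ Y @ [Bar, flip v, Bar] @ Z"
    using uv by (auto simp: twist_chord_id chord_ends_def)
  text \<open>Read backwards, T3 untwists the chord in a single move.\<close>
  have "chord_ends a (\<not> s) (flip u) (flip v)"
    using uv by (auto simp: chord_ends_def)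
  from basic_move.T3[OF this, of f1 f3 X Y Z]
  have "basic_move f1 f3 (twist_chord a D) D"
    unfolding twist by (simp add: D)
  then show ?thesis
    using w wf_gauss_twist_chord by (blast intro: moves_move)
qed

lemma moves_if_twisted:
  assumes "wf_gauss D" "wf_gauss D'" "moves (twist_chord a D) (twist_chord a D')"
  shows "moves D D'"
  using assms moves_twist_chord[of D a] moves_twist_chord[of D' a]
  by (meson moves_sym rtranclp_trans)

lemma moves_if_twisted2:
  assumes "wf_gauss D" "wf_gauss D'"
    "moves (twist_chord b (twist_chord a D)) (twist_chord b (twist_chord a D'))"
  shows "moves D D'"
  using assms by (meson moves_if_twisted wf_gauss_twist_chord)

lemma swap_heads:
  assumes w: "wf_gauss (X @ [Hd a s, Hd b t] @ Y)" and ab: "a \<noteq> b"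
  shows "moves (X @ [Hd a s, Hd b t] @ Y) (X @ [Hd b t, Hd a s] @ Y)"
proof (cases f1)
  case True
  show ?thesis
    using basic_move.F1[OF True] w ab by (intro moves_same_endpoints) auto
next
  case False
  text \<open>Twisting both chords turns the heads into tails, which F2 exchanges.\<close>
  let ?X = "twist_chord b (twist_chord a X)" and ?Y = "twist_chord b (twist_chord a Y)"
  have w': "wf_gauss (X @ [Hd b t, Hd a s] @ Y)"
    by (rule wf_gauss_by_endpoints[OF w]) (use ab in auto)
  have "wf_gauss (twist_chord b (twist_chord a (X @ [Hd a s, Hd b t] @ Y)))"
    using w by (intro wf_gauss_twist_chord)
  then have wt: "wf_gauss (?X @ [Bar, Tl a (\<not> s), Tl b (\<not> t), Bar] @ ?Y)"
    by (rule wf_gauss_by_endpoints) (use ab in auto)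
  have wt': "wf_gauss (?X @ [Bar, Tl b (\<not> t), Tl a (\<not> s), Bar] @ ?Y)"
    by (rule wf_gauss_by_endpoints[OF wt]) (use ab in auto)
  have "moves (twist_chord b (twist_chord a (X @ [Hd a s, Hd b t] @ Y)))
      (?X @ [Bar, Tl a (\<not> s), Tl b (\<not> t), Bar] @ ?Y)"
    using moves_cancel_bars[of "?X @ [Bar, Tl a (\<not> s)]" "[Tl b (\<not> t), Bar] @ ?Y"] wt ab
    by simp
  also have "moves \<dots> (?X @ [Bar, Tl b (\<not> t), Tl a (\<not> s), Bar] @ ?Y)"
    using basic_move.F2[OF False, of f3 "?X @ [Bar]" a "\<not> s" b "\<not> t" "Bar # ?Y"] wt ab
    by (intro moves_same_endpoints) auto
  also have "moves \<dots> (twist_chord b (twist_chord a (X @ [Hd b t, Hd a s] @ Y)))"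
    using moves_insert_bars[of "?X @ [Bar, Tl b (\<not> t)]" "[Tl a (\<not> s), Bar] @ ?Y"] wt' ab
    by simp
  finally show ?thesis
    by (rule moves_if_twisted2[OF w w'])
qed

lemma swap_heads_across_bar:
  assumes w: "wf_gauss (X @ [Hd a s, Bar, Hd b t] @ Y)" and ab: "a \<noteq> b"
  shows "moves (X @ [Hd a s, Bar, Hd b t] @ Y) (X @ [Hd b t, Bar, Hd a s] @ Y)"
proof (cases f3)
  case True
  show ?thesis
    using basic_move.F3[OF True] w ab by (intro moves_same_endpoints) auto
next
  case False
  let ?X = "twist_chord b (twist_chord a X)" and ?Y = "twist_chord b (twist_chord a Y)"
  have w': "wf_gauss (X @ [Hd b t, Bar, Hd a s] @ Y)"
    by (rule wf_gauss_by_endpoints[OF w]) (use ab in auto)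
  have "wf_gauss (twist_chord b (twist_chord a (X @ [Hd a s, Bar, Hd b t] @ Y)))"
    using w by (intro wf_gauss_twist_chord)
  then have wt: "wf_gauss (?X @ [Bar, Tl a (\<not> s), Bar, Tl b (\<not> t), Bar] @ ?Y)"
    by (rule wf_gauss_by_endpoints) (use ab in auto)
  have wt': "wf_gauss (?X @ [Bar, Tl b (\<not> t), Bar, Tl a (\<not> s), Bar] @ ?Y)"
    by (rule wf_gauss_by_endpoints[OF wt]) (use ab in auto)
  have "moves (twist_chord b (twist_chord a (X @ [Hd a s, Bar, Hd b t] @ Y)))
      (?X @ [Bar, Tl a (\<not> s), Bar, Tl b (\<not> t), Bar] @ ?Y)"
    using moves_cancel_bars[of "?X @ [Bar, Tl a (\<not> s)]" "[Bar, Tl b (\<not> t), Bar] @ ?Y"] wt ab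
    by simp
  also have "moves \<dots> (?X @ [Bar, Tl b (\<not> t), Bar, Tl a (\<not> s), Bar] @ ?Y)"
    using basic_move.F4[OF False, of f1 "?X @ [Bar]" a "\<not> s" b "\<not> t" "Bar # ?Y"] wt ab
    by (intro moves_same_endpoints) auto
  also have "moves \<dots> (twist_chord b (twist_chord a (X @ [Hd b t, Bar, Hd a s] @ Y)))"
    using moves_insert_bars[of "?X @ [Bar, Tl b (\<not> t)]" "[Bar, Tl a (\<not> s), Bar] @ ?Y"] wt' ab
    by simp
  finally show ?thesis
    by (rule moves_if_twisted2[OF w w'])
qed

lemma head_past_tail:
  assumes w: "wf_gauss (X @ [Hd a s, Tl c t] @ Y)" and ac: "a \<noteq> c"
  shows "moves (X @ [Hd a s, Tl c t] @ Y) (X @ [Bar, Tl c t, Hd a s, Bar] @ Y)"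
proof -
  text \<open>Twisting chord c turns its tail into a head, which the head of a may pass.\<close>
  let ?X = "twist_chord c X" and ?Y = "twist_chord c Y"
  have w': "wf_gauss (X @ [Bar, Tl c t, Hd a s, Bar] @ Y)"
    by (rule wf_gauss_by_endpoints[OF w]) (use ac in auto)
  have wt: "wf_gauss (?X @ [Hd a s, Bar, Hd c (\<not> t), Bar] @ ?Y)"
    using wf_gauss_twist_chord[OF w, of c] ac by simp
  have wt': "wf_gauss (?X @ [Hd c (\<not> t), Bar, Hd a s, Bar] @ ?Y)"
    by (rule wf_gauss_by_endpoints[OF wt]) (use ac in auto)
  have "moves (twist_chord c (X @ [Hd a s, Tl c t] @ Y))
      (?X @ [Hd c (\<not> t), Bar, Hd a s, Bar] @ ?Y)"
    using swap_heads_across_bar[of ?X a s c "\<not> t" "Bar # ?Y"] wt ac by simp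
  also have "moves \<dots> (twist_chord c (X @ [Bar, Tl c t, Hd a s, Bar] @ Y))"
    using moves_insert_bars[of ?X "[Hd c (\<not> t), Bar, Hd a s, Bar] @ ?Y"] wt' ac by simp
  finally show ?thesis
    by (rule moves_if_twisted[OF w w'])
qed

lemma head_past_bar_tail:
  assumes w: "wf_gauss (X @ [Hd a s, Bar, Tl c t] @ Y)" and ac: "a \<noteq> c"
  shows "moves (X @ [Hd a s, Bar, Tl c t] @ Y) (X @ [Bar, Tl c t, Bar, Hd a s, Bar] @ Y)"
proof -
  let ?X = "twist_chord c X" and ?Y = "twist_chord c Y"
  have w': "wf_gauss (X @ [Bar, Tl c t, Bar, Hd a s, Bar] @ Y)"
    by (rule wf_gauss_by_endpoints[OF w]) (use ac in auto)
  have wt: "wf_gauss (?X @ [Hd a s, Hd c (\<not> t), Bar] @ ?Y)"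
    by (rule wf_gauss_by_endpoints[OF wf_gauss_twist_chord[OF w, of c]]) (use ac in auto)
  have wt': "wf_gauss (?X @ [Hd c (\<not> t), Hd a s, Bar] @ ?Y)"
    by (rule wf_gauss_by_endpoints[OF wt]) (use ac in auto)
  have wt'': "wf_gauss (?X @ [Bar, Bar, Hd c (\<not> t), Hd a s, Bar] @ ?Y)"
    by (rule wf_gauss_by_endpoints[OF wt']) auto
  have "moves (twist_chord c (X @ [Hd a s, Bar, Tl c t] @ Y))
      (?X @ [Hd a s, Hd c (\<not> t), Bar] @ ?Y)"
    using moves_cancel_bars[of "?X @ [Hd a s]" "[Hd c (\<not> t), Bar] @ ?Y"] wt ac by simp
  also have "moves \<dots> (?X @ [Hd c (\<not> t), Hd a s, Bar] @ ?Y)"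
    using swap_heads[of ?X a s c "\<not> t" "Bar # ?Y"] wt ac by simp
  also have "moves \<dots> (?X @ [Bar, Bar, Hd c (\<not> t), Hd a s, Bar] @ ?Y)"
    using moves_insert_bars[of ?X "[Hd c (\<not> t), Hd a s, Bar] @ ?Y"] wt' by simp
  also have "moves \<dots> (twist_chord c (X @ [Bar, Tl c t, Bar, Hd a s, Bar] @ Y))"
    using moves_insert_bars[of "?X @ [Bar, Bar, Hd c (\<not> t)]" "[Hd a s, Bar] @ ?Y"] wt'' ac
    by simp
  finally show ?thesis
    by (rule moves_if_twisted[OF w w'])
qed

lemma head_advance:
  assumes w: "wf_gauss (X @ [Hd a s] @ Y @ [Tl a s] @ Z)" and "Y \<noteq> []" "Y \<noteq> [Bar]"
  obtains X' Y' where
    "moves (X @ [Hd a s] @ Y @ [Tl a s] @ Z) ((X @ X') @ [Hd a s] @ Y' @ [Tl a s] @ Z)"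
    "length Y' + length (chord_marks Y') < length Y + length (chord_marks Y)"
    "length (chord_marks (X' @ Y')) = length (chord_marks Y)"
proof -
  have free: "\<forall>m\<in>set Y. lab m \<noteq> Some a"
    using endpoints_outside_chord(2)[OF w] by (simp add: filter_empty_conv)
  consider b t Y1 where "Y = Hd b t # Y1" | c t Y1 where "Y = Tl c t # Y1"
    | Y1 where "Y = Bar # Bar # Y1" | b t Y1 where "Y = Bar # Hd b t # Y1"
    | c t Y1 where "Y = Bar # Tl c t # Y1"
    using \<open>Y \<noteq> []\<close> \<open>Y \<noteq> [Bar]\<close> by (metis list.exhaust mark.exhaust)
  then show ?thesis
  proof cases
    case (1 b t Y1)
    with free have "a \<noteq> b" by auto
    with w 1 show ?thesis
      using swap_heads[of X a s b t "Y1 @ [Tl a s] @ Z"] by (intro that[of "[Hd b t]" Y1]) auto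
  next
    case (2 c t Y1)
    with free have "a \<noteq> c" by auto
    with w 2 show ?thesis
      using head_past_tail[of X a s c t "Y1 @ [Tl a s] @ Z"]
      by (intro that[of "[Bar, Tl c t]" "Bar # Y1"]) auto
  next
    case (3 Y1)
    have "wf_gauss (X @ [Hd a s] @ Y1 @ [Tl a s] @ Z)"
      by (rule wf_gauss_by_endpoints[OF w]) (simp add: 3)
    with 3 show ?thesis
      using moves_cancel_bars[of "X @ [Hd a s]" "Y1 @ [Tl a s] @ Z"]
      by (intro that[of "[]" Y1]) auto
  next
    case (4 b t Y1)
    with free have "a \<noteq> b" by auto
    with w 4 show ?thesis
      using swap_heads_across_bar[of X a s b t "Y1 @ [Tl a s] @ Z"]
      by (intro that[of "[Hd b t, Bar]" Y1]) auto
  next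
    case (5 c t Y1)
    with free have "a \<noteq> c" by auto
    with w 5 show ?thesis
      using head_past_bar_tail[of X a s c t "Y1 @ [Tl a s] @ Z"]
      by (intro that[of "[Bar, Tl c t, Bar]" "Bar # Y1"]) auto
  qed
qed

lemma moves_remove_chord:
  assumes "wf_gauss (X @ [Hd a s] @ Y @ [Tl a s] @ Z)"
  shows "\<exists>D'. moves (X @ [Hd a s] @ Y @ [Tl a s] @ Z) D' \<and>
    length (chord_marks D') < length (chord_marks (X @ [Hd a s] @ Y @ [Tl a s] @ Z))"
  using assms
  \<comment> \<open>Passing a tail leaves a bar behind, hence bars count once and endpoints twice.\<close>
proof (induction "length Y + length (chord_marks Y)" arbitrary: X Y rule: less_induct)
  case less
  have ends: "chord_ends a s (Hd a s) (Tl a s)"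
    by (simp add: chord_ends_def)
  consider "Y = []" | "Y = [Bar]" | "Y \<noteq> []" "Y \<noteq> [Bar]"
    by blast
  then show ?case
  proof cases
    case 1
    have "moves (X @ [Hd a s] @ Y @ [Tl a s] @ Z) (X @ Z)"
      using basic_move.R1[OF ends, of f1 f3 X Z] less.prems
        wf_gauss_delete_chord[OF less.prems] 1
      by (intro moves_move) auto
    with 1 show ?thesis by auto
  next
    case 2
    have "moves (X @ [Hd a s] @ Y @ [Tl a s] @ Z) (X @ [Bar] @ Z)"
      using basic_move.T4[OF ends, of f1 f3 X Z] less.prems
        wf_gauss_delete_chord[OF less.prems] 2
      by (intro moves_move) auto
    with 2 show ?thesis by auto
  next
    case 3
    obtain X' Y' where step:
      "moves (X @ [Hd a s] @ Y @ [Tl a s] @ Z) ((X @ X') @ [Hd a s] @ Y' @ [Tl a s] @ Z)"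
      "length Y' + length (chord_marks Y') < length Y + length (chord_marks Y)"
      "length (chord_marks (X' @ Y')) = length (chord_marks Y)"
      using head_advance[OF less.prems 3] by blast
    obtain D' where "moves ((X @ X') @ [Hd a s] @ Y' @ [Tl a s] @ Z) D'"
      "length (chord_marks D') < length (chord_marks ((X @ X') @ [Hd a s] @ Y' @ [Tl a s] @ Z))"
      using less.hyps[OF step(2) wf_gauss_moves[OF step(1) less.prems]] by blast
    with step show ?thesis
      by (intro exI[of _ D']) (auto intro: rtranclp_trans)
  qed
qed

lemma moves_reduce_chord_marks:
  assumes w: "wf_gauss D" and "chord_marks D \<noteq> []"
  shows "\<exists>D'. moves D D' \<and> length (chord_marks D') < length (chord_marks D)"
proof -
  obtain m where "m \<in> set D" "m \<noteq> Bar"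
    using assms(2) by (auto simp: filter_empty_conv)
  moreover from \<open>m \<noteq> Bar\<close> obtain a where "lab m = Some a"
    by (cases m) auto
  ultimately have "endpoints a D \<noteq> []"
    by (auto simp: filter_empty_conv)
  with w obtain s u v X Y Z where uv: "chord_ends a s u v" and D: "D = X @ [u] @ Y @ [v] @ Z"
    by (rule wf_gauss_chord_split)
  obtain Y' Z' where rot: "moves D ([] @ [Hd a s] @ Y' @ [Tl a s] @ Z')"
    "length (chord_marks ([] @ [Hd a s] @ Y' @ [Tl a s] @ Z')) = length (chord_marks D)"
  proof (cases "u = Hd a s")
    case True
    with uv have "v = Tl a s"
      by (simp add: chord_ends_def)
    with w D True show ?thesis
      using moves_append_swap[of X "[u] @ Y @ [v] @ Z"] by (intro that[of Y "Z @ X"]) auto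
  next
    case False
    with uv have "u = Tl a s" "v = Hd a s"
      by (auto simp: chord_ends_def)
    with w D show ?thesis
      using moves_append_swap[of "X @ [u] @ Y" "[v] @ Z"] by (intro that[of "Z @ X" Y]) auto
  qed
  with moves_remove_chord[OF wf_gauss_moves[OF rot(1) w]] show ?thesis
    by (metis rtranclp_trans)
qed

lemma moves_to_replicate_Bar: "wf_gauss D \<Longrightarrow> \<exists>k. moves D (replicate k Bar)"
proof (induction "length (chord_marks D)" arbitrary: D rule: less_induct)
  case less
  show ?case
  proof (cases "chord_marks D = []")
    case True
    then have "replicate (length D) Bar = D"
      by (simp add: filter_empty_conv replicate_length_same)
    then show ?thesis by (metis rtranclp.rtrancl_refl)
  next
    case False
    then obtain D' where "moves D D'" "length (chord_marks D') < length (chord_marks D)"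
      using moves_reduce_chord_marks[OF less.prems] by blast
    with less.hyps less.prems wf_gauss_moves show ?thesis
      by (meson rtranclp_trans)
  qed
qed

lemma moves_replicate_Bar_mod_2: "moves (replicate k Bar) (replicate (k mod 2) Bar)"
proof -
  have "moves (replicate (2 * n + r) Bar) (replicate r Bar)" for n r
  proof (induction n)
    case (Suc n)
    have "moves (replicate (2 * Suc n + r) Bar) (replicate (2 * n + r) Bar)"
      using moves_cancel_bars[of "[]" "replicate (2 * n + r) Bar"] wf_gauss_replicate_Bar by simp
    with Suc show ?case by simp
  qed simp
  from this[of "k div 2" "k mod 2"] show ?thesis by simp
qed

end

theorem mainTheorem1:
  fixes f1 f3 :: bool and D :: "mark list"
  assumes "wf_gauss D"
  shows "(gstep f1 f3)\<^sup>*\<^sup>* D [] \<or> (gstep f1 f3)\<^sup>*\<^sup>* D [Bar]"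
proof -
  obtain k where "(gstep f1 f3)\<^sup>*\<^sup>* D (replicate k Bar)"
    using moves_to_replicate_Bar[OF assms] by blast
  then have "(gstep f1 f3)\<^sup>*\<^sup>* D (replicate (k mod 2) Bar)"
    using moves_replicate_Bar_mod_2 by (rule rtranclp_trans)
  moreover have "k mod 2 = 0 \<or> k mod 2 = 1"
    by arith
  ultimately show ?thesis by auto
qed

end
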